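(* Let $G$ be a bridgeless cubic graph and let $H\subseteq G$ be an (induced) subgraph with $|\delta_G(H)|=6$. Then either $H$ has a perfect matching, or $H$ contains an independent set $S$ of vertices, each of valency $3$ in $H$, such that (i) every component of $H-S$ has an odd number of vertices, (ii) the number of components of $H-S$ with an odd number of vertices equals $|S|+2$, and (iii) $|\delta_G(L)|=3$ for each component $L$ of $H-S$.
   Context: Graphs may have multiple edges and loops. For a subgraph $H$ of $G$, $\delta_G(H)$ denotes the set of edges of $G$ with exactly one end in $V(H)$. *)

theory Defs
  imports Main
begin

text \<open>A finite multigraph (multiple edges and loops allowed) is given by a vertex set V,
  an edge set E (edge names) and an incidence map inc assigning to each edge its set of
  ends: a one-element set for a loop, a two-element set otherwise.\<close>

definition multigraph :: "'v set \<Rightarrow> 'e set \<Rightarrow> ('e \<Rightarrow> 'v set) \<Rightarrow> bool" where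
  "multigraph V E inc \<longleftrightarrow> finite V \<and> finite E \<and>
     (\<forall>e\<in>E. inc e \<subseteq> V \<and> inc e \<noteq> {} \<and> card (inc e) \<le> 2)"

definition degree :: "'e set \<Rightarrow> ('e \<Rightarrow> 'v set) \<Rightarrow> 'v \<Rightarrow> nat" where
  "degree F inc v = card {e\<in>F. v \<in> inc e \<and> card (inc e) = 2} + 2 * card {e\<in>F. inc e = {v}}"

definition cubic :: "'v set \<Rightarrow> 'e set \<Rightarrow> ('e \<Rightarrow> 'v set) \<Rightarrow> bool" where
  "cubic V E inc \<longleftrightarrow> (\<forall>v\<in>V. degree E inc v = 3)"

definition induced_edges :: "'e set \<Rightarrow> ('e \<Rightarrow> 'v set) \<Rightarrow> 'v set \<Rightarrow> 'e set" where
  "induced_edges E inc W = {e\<in>E. inc e \<subseteq> W}"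

definition reach :: "'v set \<Rightarrow> 'e set \<Rightarrow> ('e \<Rightarrow> 'v set) \<Rightarrow> 'v \<Rightarrow> 'v \<Rightarrow> bool" where
  "reach W F inc u v \<longleftrightarrow> u \<in> W \<and>
     (\<lambda>a b. a \<in> W \<and> b \<in> W \<and> (\<exists>e\<in>F. inc e = {a, b}))\<^sup>*\<^sup>* u v"

definition bridge :: "'v set \<Rightarrow> 'e set \<Rightarrow> ('e \<Rightarrow> 'v set) \<Rightarrow> 'e \<Rightarrow> bool" where
  "bridge V E inc e \<longleftrightarrow> e \<in> E \<and>
     (\<exists>u v. u \<noteq> v \<and> inc e = {u, v} \<and> \<not> reach V (E - {e}) inc u v)"

definition bridgeless :: "'v set \<Rightarrow> 'e set \<Rightarrow> ('e \<Rightarrow> 'v set) \<Rightarrow> bool" where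
  "bridgeless V E inc \<longleftrightarrow> (\<forall>e\<in>E. \<not> bridge V E inc e)"

definition cut :: "'e set \<Rightarrow> ('e \<Rightarrow> 'v set) \<Rightarrow> 'v set \<Rightarrow> 'e set" where
  "cut E inc X = {e\<in>E. inc e \<inter> X \<noteq> {} \<and> \<not> inc e \<subseteq> X}"

definition components :: "'v set \<Rightarrow> 'e set \<Rightarrow> ('e \<Rightarrow> 'v set) \<Rightarrow> 'v set set" where
  "components W E inc = {{v. reach W (induced_edges E inc W) inc u v} | u. u \<in> W}"

definition has_perfect_matching :: "'e set \<Rightarrow> ('e \<Rightarrow> 'v set) \<Rightarrow> 'v set \<Rightarrow> bool" where
  "has_perfect_matching E inc X \<longleftrightarrow> (\<exists>M \<subseteq> induced_edges E inc X.
     (\<forall>e\<in>M. card (inc e) = 2) \<and> (\<forall>v\<in>X. \<exists>!e. e \<in> M \<and> v \<in> inc e))"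

definition independent :: "'e set \<Rightarrow> ('e \<Rightarrow> 'v set) \<Rightarrow> 'v set \<Rightarrow> bool" where
  "independent E inc S \<longleftrightarrow> (\<forall>e\<in>E. \<not> inc e \<subseteq> S)"

end

theory Submission
  imports Defs
begin

text \<open>If X has no perfect matching, the Tutte-Berge inequality (proved via Gallai's lemma)
  yields a barrier S \<subseteq> X such that X - S has more than |S| odd components.  For a barrier
  of maximum size all components of X - S are odd, and as |X| is even (|X| + |\<delta>(X)| is
  even in a cubic graph) there are at least |S| + 2 of them.  Every odd set L of a bridgeless
  cubic graph has |\<delta>(L)| \<ge> 3.  The cuts of the components are disjoint, and each of their
  edges either lies in \<delta>(X) or ends in S, which has only 3|S| edge ends.  Hence
  3(|S| + 2) \<le> \<Sigma> |\<delta>(L)| \<le> 6 + 3|S|, and equality throughout gives the structure claimed: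
  exactly |S| + 2 components, each with |\<delta>(L)| = 3, and every edge at S is a non-loop
  joining S to X - S.\<close>

lemma degree_induced_edges:
  assumes "\<forall>e\<in>E. v \<in> inc e \<longrightarrow> inc e \<subseteq> X"
  shows "degree (induced_edges E inc X) inc v = degree E inc v"
proof -
  have "{e \<in> induced_edges E inc X. v \<in> inc e \<and> card (inc e) = 2} =
      {e \<in> E. v \<in> inc e \<and> card (inc e) = 2}"
    and "{e \<in> induced_edges E inc X. inc e = {v}} = {e \<in> E. inc e = {v}}"
    using assms unfolding induced_edges_def by auto
  then show ?thesis
    unfolding degree_def by simp
qed

locale finite_multigraph =
  fixes V :: "'v set" and E :: "'e set" and inc :: "'e \<Rightarrow> 'v set"
  assumes multigraph: "multigraph V E inc"
begin

lemma finite_V: "finite V" and finite_E: "finite E"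
  using multigraph by (auto simp: multigraph_def)

lemma inc_subset_V: "e \<in> E \<Longrightarrow> inc e \<subseteq> V"
  and inc_nonempty: "e \<in> E \<Longrightarrow> inc e \<noteq> {}"
  and card_inc_le_2: "e \<in> E \<Longrightarrow> card (inc e) \<le> 2"
  using multigraph by (auto simp: multigraph_def)

lemma finite_inc: "e \<in> E \<Longrightarrow> finite (inc e)"
  using inc_subset_V finite_V finite_subset by blast

lemma inc_cases:
  assumes "e \<in> E"
  obtains a where "inc e = {a}" | a b where "a \<noteq> b" "inc e = {a, b}"
proof -
  have "card (inc e) \<noteq> 0"
    using finite_inc inc_nonempty assms by simp
  then have "card (inc e) = 1 \<or> card (inc e) = 2"
    using card_inc_le_2[OF assms] by linarith
  then show ?thesis
    using that by (auto simp: card_1_singleton_iff card_2_iff)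
qed

lemma inc_eq_doubleton: "e \<in> E \<Longrightarrow> \<exists>a b. inc e = {a, b}"
  by (cases rule: inc_cases) blast+

subsection \<open>Connected components\<close>

definition adj :: "'v set \<Rightarrow> 'v \<Rightarrow> 'v \<Rightarrow> bool" where
  "adj W a b \<longleftrightarrow> a \<in> W \<and> b \<in> W \<and> (\<exists>e\<in>induced_edges E inc W. inc e = {a, b})"

definition component :: "'v set \<Rightarrow> 'v \<Rightarrow> 'v set" where
  "component W u = {v. (adj W)\<^sup>*\<^sup>* u v}"

lemma adj_sym: "adj W a b \<Longrightarrow> adj W b a"
  unfolding adj_def by (auto simp: insert_commute)

lemma adj_mono: "adj W' a b \<Longrightarrow> W' \<subseteq> W \<Longrightarrow> adj W a b"
  unfolding adj_def induced_edges_def by blast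

lemma adj_rtranclp_sym: "(adj W)\<^sup>*\<^sup>* a b \<Longrightarrow> (adj W)\<^sup>*\<^sup>* b a"
  by (induction rule: rtranclp_induct) (auto intro: converse_rtranclp_into_rtranclp adj_sym)

lemma adj_rtranclp_in: "(adj W)\<^sup>*\<^sup>* u v \<Longrightarrow> u \<in> W \<Longrightarrow> v \<in> W"
  by (induction rule: rtranclp_induct) (auto simp: adj_def)

lemma adj_rtranclp_mono:
  "(adj W')\<^sup>*\<^sup>* u v \<Longrightarrow> W' \<subseteq> W \<Longrightarrow> (adj W)\<^sup>*\<^sup>* u v"
  by (induction rule: rtranclp_induct) (auto intro: rtranclp.rtrancl_into_rtrancl adj_mono)

lemma components_eq: "components W E inc = component W ` W"
  unfolding components_def component_def reach_def adj_def by auto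

lemma component_subset: "u \<in> W \<Longrightarrow> component W u \<subseteq> W"
  unfolding component_def using adj_rtranclp_in by blast

lemma mem_component_self: "u \<in> component W u"
  unfolding component_def by simp

lemma component_mono: "W' \<subseteq> W \<Longrightarrow> component W' u \<subseteq> component W u"
  unfolding component_def using adj_rtranclp_mono by blast

lemma component_eqI: "v \<in> component W u \<Longrightarrow> component W v = component W u"
  unfolding component_def
  by (auto intro: rtranclp_trans adj_rtranclp_sym)

lemma components_subset: "L \<in> components W E inc \<Longrightarrow> L \<subseteq> W"
  unfolding components_eq using component_subset by blast

lemma components_nonempty: "L \<in> components W E inc \<Longrightarrow> L \<noteq> {}"
  unfolding components_eq using mem_component_self by blast

lemma component_in_components: "u \<in> W \<Longrightarrow> component W u \<in> components W E inc"
  unfolding components_eq by blast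

lemma components_eq_component:
  assumes "L \<in> components W E inc" and "x \<in> L"
  shows "L = component W x"
proof -
  obtain u where "L = component W u"
    using assms(1) unfolding components_eq by blast
  then show ?thesis
    using component_eqI[of x W u] assms(2) by simp
qed

lemma components_disjoint:
  assumes "L \<in> components W E inc" "L' \<in> components W E inc" and "L \<inter> L' \<noteq> {}"
  shows "L = L'"
proof -
  obtain x where x: "x \<in> L" "x \<in> L'"
    using assms(3) by blast
  show ?thesis
    using components_eq_component[OF assms(1) x(1)] components_eq_component[OF assms(2) x(2)]
    by simp
qed

lemma Union_components: "\<Union> (components W E inc) = W"
proof
  show "\<Union> (components W E inc) \<subseteq> W"
    using components_subset by blast
  show "W \<subseteq> \<Union> (components W E inc)"
    using component_in_components mem_component_self by blast
qed

lemma finite_components: "finite W \<Longrightarrow> finite (components W E inc)"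
  unfolding components_eq by simp

lemma card_eq_sum_card_components:
  assumes "finite W"
  shows "card W = (\<Sum>L\<in>components W E inc. card L)"
proof -
  have "pairwise disjnt (components W E inc)"
    using components_disjoint unfolding pairwise_def disjnt_def by blast
  moreover have "finite L" if "L \<in> components W E inc" for L
    using that assms components_subset finite_subset by blast
  ultimately have "card (\<Union> (components W E inc)) = (\<Sum>L\<in>components W E inc. card L)"
    by (rule card_Union_disjoint)
  then show ?thesis
    unfolding Union_components .
qed

lemma edge_in_component:
  assumes L: "L \<in> components W E inc" and e: "e \<in> E" "inc e \<subseteq> W" "inc e \<inter> L \<noteq> {}"
  shows "inc e \<subseteq> L"
proof -
  obtain a b where ab: "inc e = {a, b}"
    using inc_eq_doubleton[OF e(1)] by blast
  then have "adj W a b" "adj W b a"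
    using e unfolding adj_def induced_edges_def by (auto simp: insert_commute)
  moreover obtain x where x: "x \<in> inc e" "x \<in> L"
    using e(3) by blast
  ultimately have "inc e \<subseteq> component W x"
    using ab unfolding component_def by auto
  then show ?thesis
    using components_eq_component[OF L x(2)] by simp
qed

lemma components_restrict:
  assumes L: "L \<in> components W E inc" and "L \<subseteq> W'" "W' \<subseteq> W"
  shows "L \<in> components W' E inc"
proof -
  obtain u where u: "u \<in> L"
    using components_nonempty[OF L] by blast
  have L_eq: "L = component W u"
    using components_eq_component[OF L u] .
  have "(adj W')\<^sup>*\<^sup>* u v \<and> v \<in> L" if "(adj W)\<^sup>*\<^sup>* u v" for v
    using that
  proof (induction rule: rtranclp_induct)
    case (step y z)
    then have "z \<in> L"
      using L_eq unfolding component_def by (auto intro: rtranclp.rtrancl_into_rtrancl)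
    obtain e where "e \<in> E" "inc e = {y, z}"
      using \<open>adj W y z\<close> unfolding adj_def induced_edges_def by blast
    moreover have "inc e \<subseteq> W'"
      using step.IH \<open>z \<in> L\<close> \<open>inc e = {y, z}\<close> \<open>L \<subseteq> W'\<close> by auto
    ultimately have "adj W' y z"
      unfolding adj_def induced_edges_def by auto
    with step show ?case
      using \<open>z \<in> L\<close> by (auto intro: rtranclp.rtrancl_into_rtrancl)
  qed (use u in simp)
  then have "component W' u = L"
    using component_mono[OF \<open>W' \<subseteq> W\<close>] L_eq unfolding component_def by blast
  then show ?thesis
    using component_in_components u \<open>L \<subseteq> W'\<close> by blast
qed

subsection \<open>Degrees and cuts in cubic graphs\<close>

text \<open>A loop contributes two ends, so that the ends at v add up to the degree of v.\<close>
definition ends_in :: "'v set \<Rightarrow> 'e \<Rightarrow> nat" where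
  "ends_in S e = (if card (inc e) = 2 then 1 else 2) * card (inc e \<inter> S)"

lemma degree_eq_sum_ends_in: "degree E inc v = (\<Sum>e\<in>E. ends_in {v} e)"
proof -
  have "ends_in {v} e = of_bool (v \<in> inc e \<and> card (inc e) = 2) + 2 * of_bool (inc e = {v})"
    if "e \<in> E" for e
    using that by (cases rule: inc_cases) (auto simp: ends_in_def)
  then show ?thesis
    unfolding degree_def using finite_E
    by (simp add: sum.distrib sum_distrib_left Collect_conj_eq Int_commute)
qed

lemma sum_degree_eq_sum_ends_in:
  assumes "finite S"
  shows "(\<Sum>v\<in>S. degree E inc v) = (\<Sum>e\<in>E. ends_in S e)"
proof -
  have ends_in_sum: "(\<Sum>v\<in>S. ends_in {v} e) = ends_in S e" for e
  proof -
    have "(\<Sum>v\<in>S. card (inc e \<inter> {v})) = (\<Sum>v\<in>S. of_bool (v \<in> inc e))"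
      by (intro sum.cong) auto
    also have "\<dots> = card (inc e \<inter> S)"
      using assms by (simp add: Int_commute Int_def)
    finally show ?thesis
      unfolding ends_in_def by (simp add: sum_distrib_left[symmetric])
  qed
  have "(\<Sum>v\<in>S. degree E inc v) = (\<Sum>e\<in>E. \<Sum>v\<in>S. ends_in {v} e)"
    unfolding degree_eq_sum_ends_in by (rule sum.swap)
  then show ?thesis
    unfolding ends_in_sum .
qed

lemma cubic_sum_ends_in:
  assumes "cubic V E inc" and "S \<subseteq> V"
  shows "(\<Sum>e\<in>E. ends_in S e) = 3 * card S"
proof -
  have "finite S"
    using assms(2) finite_V finite_subset by blast
  moreover have "(\<Sum>v\<in>S. degree E inc v) = (\<Sum>v\<in>S. 3)"
    using assms unfolding cubic_def by (intro sum.cong) auto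
  ultimately show ?thesis
    using sum_degree_eq_sum_ends_in by simp
qed

lemma cut_edge_ends:
  assumes "e \<in> cut E inc L"
  obtains a b where "inc e = {a, b}" "a \<in> L" "b \<notin> L"
proof -
  have "e \<in> E" "inc e \<inter> L \<noteq> {}" "\<not> inc e \<subseteq> L"
    using assms unfolding cut_def by auto
  then show ?thesis
  proof (cases rule: inc_cases)
    case (2 a b)
    show ?thesis
    proof (cases "a \<in> L")
      case True
      then show ?thesis
        using that[of a b] 2 \<open>\<not> inc e \<subseteq> L\<close> by auto
    next
      case False
      then show ?thesis
        using that[of b a] 2 \<open>inc e \<inter> L \<noteq> {}\<close> by (auto simp: insert_commute)
    qed
  qed (use \<open>inc e \<inter> L \<noteq> {}\<close> \<open>\<not> inc e \<subseteq> L\<close> in auto)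
qed

lemma ends_in_cut: "e \<in> cut E inc L \<Longrightarrow> ends_in L e = 1"
  unfolding cut_def by (erule CollectE, cases rule: inc_cases) (auto simp: ends_in_def)

lemma even_ends_in: "e \<in> E \<Longrightarrow> e \<notin> cut E inc L \<Longrightarrow> even (ends_in L e)"
  unfolding cut_def
  by (cases rule: inc_cases) (auto simp: ends_in_def Int_absorb2 simp del: insert_subset)

lemma even_card_add_card_cut:
  assumes "cubic V E inc" and "L \<subseteq> V"
  shows "even (card L + card (cut E inc L))"
proof -
  have "cut E inc L \<subseteq> E"
    unfolding cut_def by blast
  moreover have "(\<Sum>e\<in>cut E inc L. ends_in L e) = card (cut E inc L)"
    using ends_in_cut by simp
  ultimately have sum_split: "3 * card L = card (cut E inc L) + (\<Sum>e\<in>E - cut E inc L. ends_in L e)"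
    using cubic_sum_ends_in[OF assms] sum.subset_diff[of "cut E inc L" E "ends_in L"] finite_E
    by linarith
  have "even (\<Sum>e\<in>E - cut E inc L. ends_in L e)"
    using even_ends_in by (intro dvd_sum) auto
  moreover have "\<And>a b c :: nat. 3 * a = b + c \<Longrightarrow> even c \<Longrightarrow> even (a + b)"
    by presburger
  ultimately show ?thesis
    using sum_split by blast
qed

text \<open>A single edge leaving L would be a bridge.\<close>
lemma card_cut_ne_1:
  assumes "bridgeless V E inc"
  shows "card (cut E inc L) \<noteq> 1"
proof
  assume "card (cut E inc L) = 1"
  then obtain e where cut_eq: "cut E inc L = {e}"
    by (auto simp: card_1_singleton_iff)
  then have "e \<in> cut E inc L"
    by simp
  then have "e \<in> E"
    by (simp add: cut_def)
  obtain a b where ab: "inc e = {a, b}" "a \<in> L" "b \<notin> L"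
    using cut_edge_ends[OF \<open>e \<in> cut E inc L\<close>] by blast
  have "y \<in> L"
    if "(\<lambda>x y. x \<in> V \<and> y \<in> V \<and> (\<exists>e'\<in>E - {e}. inc e' = {x, y}))\<^sup>*\<^sup>* a y" for y
    using that
  proof (induction rule: rtranclp_induct)
    case (step y z)
    then obtain e' where e': "e' \<in> E" "e' \<noteq> e" "inc e' = {y, z}"
      by blast
    show ?case
    proof (rule ccontr)
      assume "z \<notin> L"
      then have "e' \<in> cut E inc L"
        using step.IH e' unfolding cut_def by auto
      then show False
        using cut_eq e'(2) by blast
    qed
  qed (use ab in simp)
  then have "\<not> reach V (E - {e}) inc a b"
    unfolding reach_def using ab(3) by blast
  moreover have "a \<noteq> b"
    using ab by blast
  ultimately have "bridge V E inc e"
    unfolding bridge_def using \<open>e \<in> E\<close> ab(1) by blast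
  then show False
    using assms \<open>e \<in> E\<close> unfolding bridgeless_def by blast
qed

lemma card_cut_ge_3:
  assumes "cubic V E inc" and "bridgeless V E inc" and "L \<subseteq> V" and "odd (card L)"
  shows "3 \<le> card (cut E inc L)"
proof -
  have "odd (card (cut E inc L))"
    using even_card_add_card_cut[OF assms(1,3)] assms(4) by auto
  then show ?thesis
    using card_cut_ne_1[OF assms(2), of L] by (auto elim!: oddE)
qed

subsection \<open>Matchings\<close>

definition matching :: "'v set \<Rightarrow> 'e set \<Rightarrow> bool" where
  "matching W M \<longleftrightarrow> M \<subseteq> induced_edges E inc W \<and> (\<forall>e\<in>M. card (inc e) = 2) \<and>
     (\<forall>e\<in>M. \<forall>e'\<in>M. e \<noteq> e' \<longrightarrow> inc e \<inter> inc e' = {})"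

abbreviation covered :: "'e set \<Rightarrow> 'v set" where
  "covered M \<equiv> \<Union> (inc ` M)"

definition matching_number :: "'v set \<Rightarrow> nat" where
  "matching_number W = Max (card ` {M. matching W M})"

definition maximum_matching :: "'v set \<Rightarrow> 'e set \<Rightarrow> bool" where
  "maximum_matching W M \<longleftrightarrow> matching W M \<and> card M = matching_number W"

lemma matching_subset_E: "matching W M \<Longrightarrow> M \<subseteq> E"
  unfolding matching_def induced_edges_def by blast

lemma finite_matching: "matching W M \<Longrightarrow> finite M"
  using matching_subset_E finite_E finite_subset by blast

lemma matching_edge_subset: "matching W M \<Longrightarrow> e \<in> M \<Longrightarrow> inc e \<subseteq> W"
  unfolding matching_def induced_edges_def by blast

lemma matching_edge_unique:
  "matching W M \<Longrightarrow> e \<in> M \<Longrightarrow> e' \<in> M \<Longrightarrow> v \<in> inc e \<Longrightarrow> v \<in> inc e'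
    \<Longrightarrow> e = e'"
  unfolding matching_def by blast

lemma matching_subset: "matching W M \<Longrightarrow> M' \<subseteq> M \<Longrightarrow> matching W M'"
  unfolding matching_def by blast

lemma matching_mono: "matching W' M \<Longrightarrow> W' \<subseteq> W \<Longrightarrow> matching W M"
  unfolding matching_def induced_edges_def by blast

lemma covered_subset: "matching W M \<Longrightarrow> covered M \<subseteq> W"
  using matching_edge_subset by blast

lemma finite_covered: "matching W M \<Longrightarrow> finite (covered M)"
  using finite_matching matching_subset_E finite_inc by blast

lemma card_covered:
  assumes "matching W M"
  shows "card (covered M) = 2 * card M"
proof -
  have "card (covered M) = (\<Sum>e\<in>M. card (inc e))"
    using assms finite_matching[OF assms] matching_subset_E[OF assms] finite_inc
    by (intro card_UN_disjoint) (auto simp: matching_def)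
  also have "\<dots> = (\<Sum>e\<in>M. 2)"
    using assms unfolding matching_def by simp
  finally show ?thesis
    by simp
qed

lemma card_le_matching_number: "matching W M \<Longrightarrow> card M \<le> matching_number W"
proof -
  have "{M. matching W M} \<subseteq> Pow E"
    using matching_subset_E by blast
  then have "finite {M. matching W M}"
    using finite_E finite_subset by blast
  then show "matching W M \<Longrightarrow> card M \<le> matching_number W"
    unfolding matching_number_def by (simp add: Max_ge)
qed

lemma maximum_matching_exists: "\<exists>M. maximum_matching W M"
proof -
  have "{M. matching W M} \<subseteq> Pow E"
    using matching_subset_E by blast
  then have "finite {M. matching W M}"
    using finite_E finite_subset by blast
  moreover have "matching W {}"
    unfolding matching_def by simp
  ultimately have "matching_number W \<in> card ` {M. matching W M}"
    unfolding matching_number_def by (intro Max_in) auto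
  then show ?thesis
    unfolding maximum_matching_def by auto
qed

lemma two_matching_number_le: "finite W \<Longrightarrow> 2 * matching_number W \<le> card W"
  using maximum_matching_exists[of W] card_covered covered_subset card_mono
  unfolding maximum_matching_def by metis

lemma maximum_matching_covers_adj:
  assumes M: "maximum_matching W M" and "adj W a b" "a \<noteq> b" "a \<notin> covered M"
  shows "b \<in> covered M"
proof (rule ccontr)
  assume "b \<notin> covered M"
  obtain e where e: "e \<in> induced_edges E inc W" "inc e = {a, b}"
    using \<open>adj W a b\<close> unfolding adj_def by blast
  have "e \<notin> M"
    using \<open>a \<notin> covered M\<close> e(2) by blast
  have "matching W (insert e M)"
    using M e \<open>a \<noteq> b\<close> \<open>a \<notin> covered M\<close> \<open>b \<notin> covered M\<close>
    unfolding maximum_matching_def matching_def by auto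
  then have "card (insert e M) \<le> card M"
    using card_le_matching_number M unfolding maximum_matching_def by simp
  moreover have "finite M"
    using M finite_matching unfolding maximum_matching_def by blast
  ultimately show False
    using \<open>e \<notin> M\<close> by simp
qed

lemma matching_swap:
  assumes N: "matching W N" and e: "e \<in> induced_edges E inc W" "inc e = {x, y}" "x \<noteq> y"
    and "x \<notin> covered N" and e': "e' \<in> N" "y \<in> inc e'"
  shows "matching W (insert e (N - {e'}))"
proof -
  have "inc e \<inter> inc f = {}" if "f \<in> N - {e'}" for f
  proof -
    have "x \<notin> inc f"
      using that \<open>x \<notin> covered N\<close> by blast
    moreover have "y \<notin> inc f"
      using that matching_edge_unique[OF N e'(1) _ e'(2), of f] by blast
    ultimately show ?thesis
      using e(2) by auto
  qed
  then show ?thesis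
    using N e unfolding matching_def by (auto simp: Int_commute)
qed

text \<open>N' arises from N by trading the N-edge at the M-partner y of x for the M-edge xy.\<close>
lemma maximum_matching_exchange:
  assumes M: "maximum_matching W M" and N: "maximum_matching W N"
    and x: "x \<in> covered M" "x \<notin> covered N"
  shows "\<exists>N'. maximum_matching W N' \<and> covered N' \<subseteq> insert x (covered N) \<and>
    card (M \<inter> N) < card (M \<inter> N')"
proof -
  have Mm: "matching W M" and Nm: "matching W N"
    using M N unfolding maximum_matching_def by blast+
  obtain e where e: "e \<in> M" "x \<in> inc e"
    using x(1) by blast
  have "card (inc e) = 2"
    using Mm e(1) unfolding matching_def by blast
  then obtain y where y: "inc e = {x, y}" "x \<noteq> y"
    using e(2) by (metis card_2_iff doubleton_eq_iff insertE singletonD)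
  have e_induced: "e \<in> induced_edges E inc W"
    using Mm e(1) unfolding matching_def by blast
  then have "adj W x y"
    using y(1) unfolding adj_def induced_edges_def by auto
  then have "y \<in> covered N"
    using maximum_matching_covers_adj[OF N _ y(2) x(2)] by blast
  then obtain e' where e': "e' \<in> N" "y \<in> inc e'"
    by blast
  have "e \<notin> N"
    using x(2) e(2) by blast
  have "e' \<notin> M"
    using matching_edge_unique[OF Mm _ e(1) e'(2)] y(1) e'(1) \<open>e \<notin> N\<close> by auto
  define N' where "N' = insert e (N - {e'})"
  have "matching W N'"
    unfolding N'_def using matching_swap[OF Nm e_induced y(1,2) x(2) e'] .
  moreover have "card N' = card N"
    unfolding N'_def using finite_matching[OF Nm] \<open>e \<notin> N\<close> card_Suc_Diff1[OF _ e'(1)] by simp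
  ultimately have "maximum_matching W N'"
    using N unfolding maximum_matching_def by simp
  moreover have "covered N' \<subseteq> insert x (covered N)"
    unfolding N'_def using y(1) \<open>y \<in> covered N\<close> by auto
  moreover have "M \<inter> N' = insert e (M \<inter> N)"
    unfolding N'_def using e(1) \<open>e' \<notin> M\<close> by auto
  then have "card (M \<inter> N) < card (M \<inter> N')"
    using finite_matching[OF Mm] \<open>e \<notin> N\<close> by simp
  ultimately show ?thesis
    by blast
qed

lemma card_covered_Diff_commute:
  assumes "maximum_matching W M" and "maximum_matching W N"
  shows "card (covered M - covered N) = card (covered N - covered M)"
proof -
  have "matching W M" and "matching W N"
    using assms unfolding maximum_matching_def by blast+
  then have "finite (covered M)" "finite (covered N)"
    by (simp_all add: finite_covered)
  moreover have "card (covered M) = card (covered N)"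
    using card_covered[OF \<open>matching W M\<close>] card_covered[OF \<open>matching W N\<close>] assms
    unfolding maximum_matching_def by simp
  ultimately show ?thesis
    by (simp add: card_Diff_subset_Int Int_commute)
qed

text \<open>Gallai's lemma.  Induction along a walk u, t, ..., v: take a maximum matching N
  missing t with |M \<inter> N| maximal; a vertex of covered M - covered N other than t would
  allow an exchange increasing |M \<inter> N|.\<close>
lemma exposed_vertices_disconnected:
  assumes avoidable: "\<forall>t\<in>W. \<exists>N. maximum_matching W N \<and> t \<notin> covered N"
    and "(adj W)\<^sup>*\<^sup>* u v"
  shows "maximum_matching W M \<Longrightarrow> u \<notin> covered M \<Longrightarrow> v \<notin> covered M
    \<Longrightarrow> u = v"
  using \<open>(adj W)\<^sup>*\<^sup>* u v\<close>
proof (induction arbitrary: M rule: converse_rtranclp_induct)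
  case (step u t)
  show "u = v"
  proof (rule ccontr)
    assume "u \<noteq> v"
    have "t \<in> W"
      using \<open>adj W u t\<close> unfolding adj_def by blast
    let ?P = "\<lambda>N. maximum_matching W N \<and> t \<notin> covered N"
    have "finite M"
      using finite_matching step.prems(1) unfolding maximum_matching_def by blast
    then have "\<forall>N. ?P N \<longrightarrow> card (M \<inter> N) < Suc (card M)"
      by (simp add: card_mono le_imp_less_Suc)
    then obtain N where N: "?P N"
      and N_greatest: "\<forall>N'. ?P N' \<longrightarrow> card (M \<inter> N') \<le> card (M \<inter> N)"
      using ex_has_greatest_nat[of ?P _ "\<lambda>N. card (M \<inter> N)"] avoidable \<open>t \<in> W\<close> by metis
    have "t \<noteq> v"
    proof
      assume "t = v"
      then show False
        using maximum_matching_covers_adj[OF step.prems(1) \<open>adj W u t\<close> _ step.prems(2)]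
          \<open>u \<noteq> v\<close> step.prems(3) by blast
    qed
    then have "v \<in> covered N"
      using step.IH N by blast
    have "t \<noteq> u"
      using step.IH step.prems \<open>u \<noteq> v\<close> by blast
    then have "u \<in> covered N"
      using maximum_matching_covers_adj[OF _ adj_sym[OF \<open>adj W u t\<close>]] N by blast
    have "{u, v} \<subseteq> covered N - covered M"
      using \<open>u \<in> covered N\<close> \<open>v \<in> covered N\<close> step.prems(2,3) by blast
    then have "card {u, v} \<le> card (covered N - covered M)"
      using finite_covered N unfolding maximum_matching_def by (intro card_mono) auto
    then have "2 \<le> card (covered N - covered M)"
      using \<open>u \<noteq> v\<close> by simp
    then have "\<not> covered M - covered N \<subseteq> {t}"
      using card_covered_Diff_commute[OF step.prems(1) N[THEN conjunct1]]
        card_mono[of "{t}" "covered M - covered N"] by auto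
    then obtain x where x: "x \<in> covered M" "x \<notin> covered N" "x \<noteq> t"
      by blast
    obtain N' where "maximum_matching W N'" "covered N' \<subseteq> insert x (covered N)"
      "card (M \<inter> N) < card (M \<inter> N')"
      using maximum_matching_exchange[OF step.prems(1) N[THEN conjunct1] x(1,2)] by blast
    moreover have "t \<notin> covered N'"
      using calculation(2) N x(3) by blast
    ultimately show False
      using N_greatest by fastforce
  qed
qed simp

subsection \<open>The Tutte--Berge inequality\<close>

definition odd_components :: "'v set \<Rightarrow> 'v set set" where
  "odd_components W = {L \<in> components W E inc. odd (card L)}"

lemma finite_odd_components: "finite W \<Longrightarrow> finite (odd_components W)"
  unfolding odd_components_def using finite_components by simp

lemma card_component_by_matching:
  assumes M: "matching W M" and C: "C \<in> components W E inc" and "finite W"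
  shows "card C = card (C - covered M) + 2 * card {e\<in>M. inc e \<subseteq> C}"
proof -
  have "C \<inter> covered M = covered {e\<in>M. inc e \<subseteq> C}"
  proof
    show "C \<inter> covered M \<subseteq> covered {e\<in>M. inc e \<subseteq> C}"
    proof
      fix x assume "x \<in> C \<inter> covered M"
      then obtain e where e: "e \<in> M" "x \<in> inc e" "x \<in> C"
        by blast
      then have "inc e \<subseteq> C"
        using edge_in_component[OF C] matching_subset_E[OF M] matching_edge_subset[OF M]
        by blast
      then show "x \<in> covered {e\<in>M. inc e \<subseteq> C}"
        using e by blast
    qed
  qed blast
  moreover have "finite C"
    using components_subset[OF C] \<open>finite W\<close> finite_subset by blast
  ultimately show ?thesis
    using card_Int_Diff[of C "covered M"] card_covered[OF matching_subset[OF M]] by simp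
qed

text \<open>By Gallai's lemma every component contains at most one vertex missed by a maximum
  matching, and a component containing one is odd.\<close>
lemma card_le_if_no_essential_vertex:
  assumes "finite W"
    and avoidable: "\<forall>t\<in>W. \<exists>N. maximum_matching W N \<and> t \<notin> covered N"
  shows "card W \<le> 2 * matching_number W + card (odd_components W)"
proof -
  obtain M where M: "maximum_matching W M"
    using maximum_matching_exists by blast
  then have Mm: "matching W M"
    unfolding maximum_matching_def by blast
  define D where "D = W - covered M"
  have "card W = 2 * matching_number W + card D"
    using card_Int_Diff[OF \<open>finite W\<close>, of "covered M"] covered_subset[OF Mm] card_covered[OF Mm] M
    unfolding D_def maximum_matching_def by (simp add: Int_absorb1)
  have exposed_in_component: "component W d - covered M = {d}" if "d \<in> D" for d
  proof -
    have "x = d" if "x \<in> component W d" "x \<notin> covered M" for x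
      using exposed_vertices_disconnected[OF avoidable _ M] that \<open>d \<in> D\<close>
      unfolding component_def D_def by blast
    then show ?thesis
      using \<open>d \<in> D\<close> mem_component_self unfolding D_def by blast
  qed
  have "inj_on (component W) D"
  proof (rule inj_onI)
    fix d d' assume "d \<in> D" "d' \<in> D" "component W d = component W d'"
    then show "d = d'"
      using exposed_in_component by blast
  qed
  moreover have "component W ` D \<subseteq> odd_components W"
  proof
    fix C assume "C \<in> component W ` D"
    then obtain d where "d \<in> D" "C = component W d"
      by blast
    moreover have "C \<in> components W E inc"
      using calculation component_in_components unfolding D_def by blast
    ultimately show "C \<in> odd_components W"
      using card_component_by_matching[OF Mm _ \<open>finite W\<close>] exposed_in_component
      unfolding odd_components_def by simp
  qed
  ultimately have "card D \<le> card (odd_components W)"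
    using card_inj_on_le finite_odd_components[OF \<open>finite W\<close>] by blast
  with \<open>card W = 2 * matching_number W + card D\<close> show ?thesis
    by simp
qed

lemma matching_number_remove_essential_vertex:
  assumes "v \<in> W" and essential: "\<forall>M. maximum_matching W M \<longrightarrow> v \<in> covered M"
  shows "matching_number (W - {v}) + 1 = matching_number W"
proof -
  obtain M where M: "maximum_matching W M"
    using maximum_matching_exists by blast
  then obtain e where e: "e \<in> M" "v \<in> inc e"
    using essential by blast
  have Mm: "matching W M"
    using M unfolding maximum_matching_def by blast
  have "matching (W - {v}) (M - {e})"
    using Mm matching_edge_unique[OF Mm _ e(1) _ e(2)]
    unfolding matching_def induced_edges_def by blast
  then have "card M \<le> matching_number (W - {v}) + 1"
    using card_le_matching_number card_Suc_Diff1[OF finite_matching[OF Mm] e(1)] by fastforce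
  moreover obtain M' where M': "maximum_matching (W - {v}) M'"
    using maximum_matching_exists by blast
  then have "matching W M'" "v \<notin> covered M'"
    using matching_mono covered_subset unfolding maximum_matching_def by blast+
  then have "matching_number (W - {v}) < matching_number W"
    using essential card_le_matching_number M' unfolding maximum_matching_def
    by (metis le_neq_implies_less)
  ultimately show ?thesis
    using M unfolding maximum_matching_def by linarith
qed

theorem tutte_berge:
  "finite W \<Longrightarrow>
    \<exists>U\<subseteq>W. card W + card U \<le> 2 * matching_number W + card (odd_components (W - U))"
proof (induction "card W" arbitrary: W rule: less_induct)
  case less
  show ?case
  proof (cases "\<exists>v\<in>W. \<forall>M. maximum_matching W M \<longrightarrow> v \<in> covered M")
    case True
    then obtain v where v: "v \<in> W" "\<forall>M. maximum_matching W M \<longrightarrow> v \<in> covered M"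
      by blast
    have "card (W - {v}) < card W"
      using card_Diff1_less[OF less.prems v(1)] .
    then obtain U where U: "U \<subseteq> W - {v}"
      "card (W - {v}) + card U \<le> 2 * matching_number (W - {v}) + card (odd_components (W - {v} - U))"
      using less.hyps less.prems by blast
    have "finite U"
      using U(1) less.prems finite_subset by blast
    then have "card W + card (insert v U) \<le> 2 * matching_number W + card (odd_components (W - insert v U))"
      using U v(1) matching_number_remove_essential_vertex[OF v] card_Suc_Diff1[OF less.prems v(1)]
      by (simp add: subset_Diff_insert Diff_insert2[symmetric])
    then show ?thesis
      using U(1) v(1) by blast
  next
    case False
    then have "card W \<le> 2 * matching_number W + card (odd_components W)"
      using card_le_if_no_essential_vertex[OF less.prems] by blast
    then show ?thesis
      by (intro exI[of _ "{}"]) simp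
  qed
qed

subsection \<open>Tutte barriers\<close>

lemma perfect_matching_if_matching_number:
  assumes "finite X" and "2 * matching_number X = card X"
  shows "has_perfect_matching E inc X"
proof -
  obtain M where M: "maximum_matching X M"
    using maximum_matching_exists by blast
  then have Mm: "matching X M"
    unfolding maximum_matching_def by blast
  have "covered M = X"
    using card_subset_eq[OF assms(1) covered_subset[OF Mm]] card_covered[OF Mm] M assms(2)
    unfolding maximum_matching_def by simp
  have unique: "\<exists>!e. e \<in> M \<and> v \<in> inc e" if v: "v \<in> X" for v
  proof -
    obtain e where "e \<in> M" "v \<in> inc e"
      using v \<open>covered M = X\<close> by blast
    then show ?thesis
      using matching_edge_unique[OF Mm] by (intro ex1I[of _ e]) blast+
  qed
  have "M \<subseteq> induced_edges E inc X" "\<forall>e\<in>M. card (inc e) = 2"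
    using Mm unfolding matching_def by blast+
  then show ?thesis
    unfolding has_perfect_matching_def using unique by (intro exI[of _ M] conjI ballI) auto
qed

lemma tutte_barrier_exists:
  assumes "finite X" and "\<not> has_perfect_matching E inc X"
  shows "\<exists>S\<subseteq>X. card S < card (odd_components (X - S))"
proof -
  have "2 * matching_number X < card X"
    using two_matching_number_le[OF assms(1)] perfect_matching_if_matching_number[OF assms(1)]
      assms(2) by fastforce
  moreover obtain U where "U \<subseteq> X"
    "card X + card U \<le> 2 * matching_number X + card (odd_components (X - U))"
    using tutte_berge[OF assms(1)] by blast
  ultimately show ?thesis
    by (intro exI[of _ U]) simp
qed

lemma odd_component_after_remove:
  assumes "finite W" and C: "C \<in> components W E inc" and "even (card C)" and "v \<in> C"
  obtains K where "K \<in> odd_components (W - {v})" "K \<subseteq> C"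
proof -
  define KK where "KK = {K \<in> components (W - {v}) E inc. K \<subseteq> C}"
  have "\<Union> KK = C - {v}"
  proof
    show "\<Union> KK \<subseteq> C - {v}"
      unfolding KK_def using components_subset by blast
    show "C - {v} \<subseteq> \<Union> KK"
    proof
      fix x assume x: "x \<in> C - {v}"
      have "component (W - {v}) x \<subseteq> component W x"
        by (rule component_mono) blast
      also have "\<dots> = C"
        using components_eq_component[OF C] x by simp
      finally have "component (W - {v}) x \<subseteq> C" .
      moreover have "x \<in> W - {v}"
        using x components_subset[OF C] by blast
      ultimately have "component (W - {v}) x \<in> KK"
        unfolding KK_def by (simp add: component_in_components)
      then show "x \<in> \<Union> KK"
        using mem_component_self by (rule UnionI)
    qed
  qed
  moreover have "finite C"
    using components_subset[OF C] \<open>finite W\<close> finite_subset by blast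
  moreover have "pairwise disjnt KK"
    unfolding pairwise_def disjnt_def KK_def using components_disjoint by blast
  moreover have "finite K" if "K \<in> KK" for K
    using that \<open>finite C\<close> finite_subset unfolding KK_def by blast
  ultimately have "card (C - {v}) = (\<Sum>K\<in>KK. card K)"
    using card_Union_disjoint by metis
  moreover have "odd (card (C - {v}))"
    using \<open>even (card C)\<close> \<open>v \<in> C\<close> \<open>finite C\<close> card_gt_0_iff by fastforce
  ultimately have "\<not> (\<forall>K\<in>KK. even (card K))"
    using dvd_sum[of KK 2 card] by fastforce
  then obtain K where "K \<in> KK" "odd (card K)"
    by blast
  then show ?thesis
    using that unfolding KK_def odd_components_def by blast
qed

lemma card_odd_components_remove:
  assumes "finite W" and C: "C \<in> components W E inc" and "even (card C)" and "v \<in> C"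
  shows "card (odd_components W) < card (odd_components (W - {v}))"
proof -
  obtain K where K: "K \<in> odd_components (W - {v})" "K \<subseteq> C"
    using odd_component_after_remove[OF assms] .
  have "odd_components W \<subseteq> odd_components (W - {v})"
  proof
    fix L assume "L \<in> odd_components W"
    then have L: "L \<in> components W E inc" "odd (card L)"
      unfolding odd_components_def by auto
    have "L \<inter> C = {}"
    proof (rule ccontr)
      assume "L \<inter> C \<noteq> {}"
      then have "L = C"
        using components_disjoint[OF L(1) C] by blast
      then show False
        using L(2) \<open>even (card C)\<close> by simp
    qed
    then have "L \<subseteq> W - {v}"
      using components_subset[OF L(1)] \<open>v \<in> C\<close> by blast
    then have "L \<in> components (W - {v}) E inc"
      using components_restrict[OF L(1)] by blast
    then show "L \<in> odd_components (W - {v})"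
      using L(2) unfolding odd_components_def by blast
  qed
  moreover have "K \<notin> odd_components W"
  proof
    assume "K \<in> odd_components W"
    moreover have "K \<inter> C \<noteq> {}"
      using K components_nonempty unfolding odd_components_def by blast
    ultimately have "K = C"
      using components_disjoint[OF _ C] unfolding odd_components_def by blast
    then show False
      using K(1) \<open>even (card C)\<close> unfolding odd_components_def by simp
  qed
  ultimately have "odd_components W \<subset> odd_components (W - {v})"
    using K(1) by blast
  then show ?thesis
    using finite_odd_components[of "W - {v}"] \<open>finite W\<close> by (simp add: psubset_card_mono)
qed

text \<open>A barrier of maximum size leaves only odd components: removing a vertex of an even
  component would give a larger barrier.\<close>
lemma tutte_barrier_odd_components:
  assumes "finite X" and "\<not> has_perfect_matching E inc X"
  obtains S where "S \<subseteq> X" "card S < card (odd_components (X - S))"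
    "\<forall>L\<in>components (X - S) E inc. odd (card L)"
proof -
  let ?P = "\<lambda>S. S \<subseteq> X \<and> card S < card (odd_components (X - S))"
  have "\<forall>S. ?P S \<longrightarrow> card S < Suc (card X)"
    using card_mono[OF assms(1)] by (simp add: le_imp_less_Suc)
  then obtain S where S: "?P S" and S_greatest: "\<forall>S'. ?P S' \<longrightarrow> card S' \<le> card S"
    using ex_has_greatest_nat[of ?P _ card] tutte_barrier_exists[OF assms] by metis
  have "odd (card L)" if L: "L \<in> components (X - S) E inc" for L
  proof (rule ccontr)
    assume "\<not> odd (card L)"
    then have "even (card L)"
      by simp
    obtain v where "v \<in> L"
      using components_nonempty[OF L] by blast
    then have v: "v \<in> X" "v \<notin> S"
      using components_subset[OF L] by auto
    have "finite S"
      using S assms(1) finite_subset by blast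
    then have "card (insert v S) = card S + 1"
      using v(2) by simp
    also have "\<dots> \<le> card (odd_components (X - S))"
      using S by simp
    also have "\<dots> < card (odd_components (X - S - {v}))"
      using card_odd_components_remove[OF _ L \<open>even (card L)\<close> \<open>v \<in> L\<close>] assms(1) by simp
    also have "X - S - {v} = X - insert v S"
      by blast
    finally have "card (insert v S) \<le> card S"
      using S_greatest S v(1) by simp
    with \<open>finite S\<close> v(2) show False
      by simp
  qed
  then show ?thesis
    using that S by blast
qed

lemma even_card_add_card_components:
  assumes "finite W" and "\<forall>L\<in>components W E inc. odd (card L)"
  shows "even (card W + card (components W E inc))"
proof -
  have "even (sum card A + card A)" if "finite A" "\<forall>L\<in>A. odd (card L)" for A :: "'v set set"
    using that by (induction A rule: finite_induct) auto
  then show ?thesis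
    using assms finite_components card_eq_sum_card_components by simp
qed

lemma tutte_barrier_even_card:
  assumes "finite X" and "even (card X)" and "\<not> has_perfect_matching E inc X"
  obtains S where "S \<subseteq> X" "\<forall>L\<in>components (X - S) E inc. odd (card L)"
    "card S + 2 \<le> card (components (X - S) E inc)"
proof -
  obtain S where S: "S \<subseteq> X" "card S < card (odd_components (X - S))"
    and odd: "\<forall>L\<in>components (X - S) E inc. odd (card L)"
    using tutte_barrier_odd_components[OF assms(1,3)] by blast
  then have "odd_components (X - S) = components (X - S) E inc"
    unfolding odd_components_def by blast
  then have "card S < card (components (X - S) E inc)"
    using S(2) by simp
  moreover have "even (card (X - S) + card (components (X - S) E inc))"
    using even_card_add_card_components odd assms(1) by simp
  moreover have "card (X - S) = card X - card S"
    using assms(1) S(1) finite_subset by (intro card_Diff_subset) auto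
  moreover have "card S \<le> card X"
    using assms(1) S(1) by (rule card_mono)
  moreover have "\<And>x s c :: nat.
      even x \<Longrightarrow> s \<le> x \<Longrightarrow> even (x - s + c) \<Longrightarrow> s < c \<Longrightarrow> s + 2 \<le> c"
    by presburger
  ultimately have "card S + 2 \<le> card (components (X - S) E inc)"
    using assms(2) by metis
  with S(1) odd show ?thesis
    using that by blast
qed

lemma cut_components_disjoint:
  assumes L: "L \<in> components W E inc" and L': "L' \<in> components W E inc" and "L \<noteq> L'"
  shows "cut E inc L \<inter> cut E inc L' = {}"
proof (rule ccontr)
  assume "cut E inc L \<inter> cut E inc L' \<noteq> {}"
  then obtain e where e: "e \<in> cut E inc L" "e \<in> cut E inc L'"
    by blast
  obtain a b where ab: "inc e = {a, b}" "a \<in> L" "b \<notin> L"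
    using cut_edge_ends[OF e(1)] by blast
  have "L \<inter> L' = {}"
    using components_disjoint[OF L L'] \<open>L \<noteq> L'\<close> by blast
  moreover have "inc e \<inter> L' \<noteq> {}"
    using e(2) unfolding cut_def by blast
  ultimately have "b \<in> L'"
    using ab by auto
  then have "inc e \<subseteq> W"
    using ab components_subset[OF L] components_subset[OF L'] by auto
  moreover have "e \<in> E"
    using e(1) unfolding cut_def by blast
  ultimately have "inc e \<subseteq> L"
    using edge_in_component[OF L] ab(1,2) by blast
  then show False
    using ab by blast
qed

lemma card_Union_cut_components:
  assumes "finite W"
  shows "card (\<Union>L\<in>components W E inc. cut E inc L) = (\<Sum>L\<in>components W E inc. card (cut E inc L))"
  using finite_components[OF assms] cut_components_disjoint finite_E
  by (intro card_UN_disjoint) (auto simp: cut_def)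

definition barrier_edges :: "'v set \<Rightarrow> 'v set \<Rightarrow> 'e set" where
  "barrier_edges X S = (\<Union>L\<in>components (X - S) E inc. cut E inc L) - cut E inc X"

lemma barrier_edges_subset: "barrier_edges X S \<subseteq> E"
  unfolding barrier_edges_def cut_def by blast

lemma finite_barrier_edges: "finite (barrier_edges X S)"
  using barrier_edges_subset finite_E finite_subset by blast

lemma barrier_edge:
  assumes "e \<in> barrier_edges X S"
  shows "inc e \<subseteq> X \<and> card (inc e) = 2 \<and> card (inc e \<inter> S) = 1"
proof -
  obtain L where L: "L \<in> components (X - S) E inc" and e: "e \<in> cut E inc L" "e \<notin> cut E inc X"
    using assms unfolding barrier_edges_def by blast
  obtain a b where ab: "inc e = {a, b}" "a \<in> L" "b \<notin> L"
    using cut_edge_ends[OF e(1)] by blast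
  have "e \<in> E"
    using e(1) unfolding cut_def by blast
  have "a \<in> X - S"
    using ab(2) components_subset[OF L] by blast
  then have "b \<in> X"
    using e(2) ab(1) \<open>e \<in> E\<close> unfolding cut_def by blast
  have "b \<in> S"
  proof (rule ccontr)
    assume "b \<notin> S"
    then have "inc e \<subseteq> X - S"
      using ab(1) \<open>a \<in> X - S\<close> \<open>b \<in> X\<close> by auto
    then have "inc e \<subseteq> L"
      using edge_in_component[OF L \<open>e \<in> E\<close>] ab(1,2) by blast
    then show False
      using ab by blast
  qed
  then have "inc e \<inter> S = {b}" and "a \<noteq> b"
    using ab \<open>a \<in> X - S\<close> by auto
  then show ?thesis
    using ab(1) \<open>a \<in> X - S\<close> \<open>b \<in> X\<close> by simp
qed

lemma sum_card_cut_components_le: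
  assumes "finite X"
  shows "(\<Sum>L\<in>components (X - S) E inc. card (cut E inc L)) \<le>
    card (cut E inc X) + card (barrier_edges X S)"
proof -
  have "(\<Sum>L\<in>components (X - S) E inc. card (cut E inc L)) =
      card (\<Union>L\<in>components (X - S) E inc. cut E inc L)"
    using card_Union_cut_components[of "X - S"] assms by simp
  also have "\<dots> \<le> card (cut E inc X \<union> barrier_edges X S)"
  proof (rule card_mono)
    show "finite (cut E inc X \<union> barrier_edges X S)"
      using finite_barrier_edges finite_E unfolding cut_def by simp
  qed (auto simp: barrier_edges_def)
  also have "\<dots> \<le> card (cut E inc X) + card (barrier_edges X S)"
    by (rule card_Un_le)
  finally show ?thesis .
qed

text \<open>All estimates in 3 (|S| + 2) \<le> \<Sigma> |\<delta>(L)| \<le> |\<delta>(X)| + |barrier_edges X S| \<le> 6 + 3|S|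
  are tight.\<close>
lemma tight_barrier:
  assumes "cubic V E inc" and "X \<subseteq> V" and "card (cut E inc X) \<le> 6" and "S \<subseteq> X"
    and cut_ge_3: "\<forall>L\<in>components (X - S) E inc. 3 \<le> card (cut E inc L)"
    and many: "card S + 2 \<le> card (components (X - S) E inc)"
  shows "card (components (X - S) E inc) = card S + 2"
    and "\<forall>L\<in>components (X - S) E inc. card (cut E inc L) = 3"
    and "\<forall>e\<in>E. inc e \<inter> S \<noteq> {} \<longrightarrow>
      inc e \<subseteq> X \<and> card (inc e) = 2 \<and> card (inc e \<inter> S) = 1"
proof -
  let ?CC = "components (X - S) E inc" and ?D = "barrier_edges X S"
  have "finite X"
    using assms(2) finite_V finite_subset by blast
  have cuts_ge: "(\<Sum>L\<in>?CC. 3) \<le> (\<Sum>L\<in>?CC. card (cut E inc L))"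
    using cut_ge_3 by (intro sum_mono) blast
  have "card ?D = (\<Sum>e\<in>?D. ends_in S e)"
    using barrier_edge unfolding ends_in_def by simp
  then have cuts_le: "(\<Sum>L\<in>?CC. card (cut E inc L)) \<le> card (cut E inc X) + (\<Sum>e\<in>?D. ends_in S e)"
    using sum_card_cut_components_le[OF \<open>finite X\<close>, of S] by linarith
  have "(\<Sum>e\<in>E. ends_in S e) = (\<Sum>e\<in>E - ?D. ends_in S e) + (\<Sum>e\<in>?D. ends_in S e)"
    using sum.subset_diff[OF barrier_edges_subset finite_E] .
  moreover have "(\<Sum>e\<in>E. ends_in S e) = 3 * card S"
    using cubic_sum_ends_in assms(1,2,4) by blast
  moreover have "(\<Sum>L\<in>?CC. 3) = 3 * card ?CC"
    by simp
  ultimately have sum_eq: "(\<Sum>L\<in>?CC. 3) = (\<Sum>L\<in>?CC. card (cut E inc L))"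
    and "card ?CC = card S + 2" and no_other_ends: "(\<Sum>e\<in>E - ?D. ends_in S e) = 0"
    using cuts_ge cuts_le assms(3) many by linarith+
  then show "card ?CC = card S + 2"
    by blast
  show "\<forall>L\<in>?CC. card (cut E inc L) = 3"
    using sum_mono_inv[OF sum_eq] cut_ge_3 finite_components[OF finite_Diff[OF \<open>finite X\<close>]]
    by (metis (no_types, lifting))
  show "\<forall>e\<in>E. inc e \<inter> S \<noteq> {} \<longrightarrow>
    inc e \<subseteq> X \<and> card (inc e) = 2 \<and> card (inc e \<inter> S) = 1"
  proof (intro ballI impI)
    fix e assume "e \<in> E" "inc e \<inter> S \<noteq> {}"
    then have "ends_in S e \<noteq> 0"
      using finite_inc unfolding ends_in_def by simp
    moreover have "\<forall>e\<in>E - ?D. ends_in S e = 0"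
      using no_other_ends finite_E by simp
    ultimately have "e \<in> ?D"
      using \<open>e \<in> E\<close> by (metis DiffI)
    then show "inc e \<subseteq> X \<and> card (inc e) = 2 \<and> card (inc e \<inter> S) = 1"
      by (rule barrier_edge)
  qed
qed

lemma independent_if_edges_meet_once:
  assumes "\<forall>e\<in>E. inc e \<inter> S \<noteq> {} \<longrightarrow> card (inc e) = 2 \<and> card (inc e \<inter> S) = 1"
  shows "independent E inc S"
  unfolding independent_def
proof (intro ballI notI)
  fix e assume "e \<in> E" "inc e \<subseteq> S"
  then have "inc e \<inter> S = inc e" "inc e \<noteq> {}"
    using inc_nonempty by blast+
  then show False
    using assms \<open>e \<in> E\<close> by auto
qed

lemma cubic_degree_induced_edges:
  assumes "cubic V E inc" and "v \<in> V" and "\<forall>e\<in>E. v \<in> inc e \<longrightarrow> inc e \<subseteq> X"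
  shows "degree (induced_edges E inc X) inc v = 3"
  using degree_induced_edges[OF assms(3)] assms(1,2) unfolding cubic_def by simp

end

theorem theorem4p1:
  fixes V :: "'v set" and E :: "'e set" and inc :: "'e \<Rightarrow> 'v set" and X :: "'v set"
  assumes "multigraph V E inc" and "cubic V E inc" and "bridgeless V E inc"
    and "X \<subseteq> V"
    and "card (cut E inc X) = 6"
  shows "has_perfect_matching E inc X \<or>
    (\<exists>S \<subseteq> X. independent E inc S \<and>
       (\<forall>v\<in>S. degree (induced_edges E inc X) inc v = 3) \<and>
       (\<forall>L\<in>components (X - S) E inc. odd (card L)) \<and>
       card {L\<in>components (X - S) E inc. odd (card L)} = card S + 2 \<and>
       (\<forall>L\<in>components (X - S) E inc. card (cut E inc L) = 3))"
proof (cases "has_perfect_matching E inc X")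
  case False
  interpret finite_multigraph V E inc
    by (rule finite_multigraph.intro) fact
  have "finite X"
    using assms(4) finite_V finite_subset by blast
  moreover have "even (card X)"
    using even_card_add_card_cut[OF assms(2,4)] assms(5) by simp
  ultimately obtain S where S: "S \<subseteq> X" and odd: "\<forall>L\<in>components (X - S) E inc. odd (card L)"
    and many: "card S + 2 \<le> card (components (X - S) E inc)"
    using tutte_barrier_even_card False by blast
  have "\<forall>L\<in>components (X - S) E inc. 3 \<le> card (cut E inc L)"
    using card_cut_ge_3[OF assms(2,3)] odd components_subset assms(4) by (meson Diff_subset order_trans)
  moreover have "card (cut E inc X) \<le> 6"
    using assms(5) by simp
  ultimately have comps: "card (components (X - S) E inc) = card S + 2"
    and cuts: "\<forall>L\<in>components (X - S) E inc. card (cut E inc L) = 3"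
    and edges_at_S: "\<forall>e\<in>E. inc e \<inter> S \<noteq> {} \<longrightarrow>
      inc e \<subseteq> X \<and> card (inc e) = 2 \<and> card (inc e \<inter> S) = 1"
    using tight_barrier[OF assms(2,4) _ S _ many] by blast+
  have "independent E inc S"
    using edges_at_S by (intro independent_if_edges_meet_once) blast
  moreover have "degree (induced_edges E inc X) inc v = 3" if "v \<in> S" for v
    using cubic_degree_induced_edges[OF assms(2)] edges_at_S that S assms(4) by blast
  moreover have "{L\<in>components (X - S) E inc. odd (card L)} = components (X - S) E inc"
    using odd by blast
  ultimately show ?thesis
    using S odd comps cuts by (intro disjI2 exI[of _ S]) simp
qed simp

end
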